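(* Let $n\ge1$ and $m\ge2$. The group $G_{n,m}$ generated by $s_0,\dots,s_m$ is a quotient of the affine Weyl group $\tilde C_m$.
   Context: The Yoke graph $Y_{n,m}$ has vertices the tuples $v=(v_0,\dots,v_{m+1})$ with $v_0,v_{m+1}\in\mathbb{Z}_n$, $v_1,\dots,v_m\in\{0,1\}$, $\sum v_i\equiv0\pmod n$ (bucket entries mod $n$). For $0\le i\le m$, $\overleftarrow{s}_i(v)$ replaces $v_i,v_{i+1}$ by $v_i+1,v_{i+1}-1$ and $\overrightarrow{s}_i(v)$ replaces them by $v_i-1,v_{i+1}+1$. Define permutations of the vertex set: $s_0(v)=\overleftarrow{s}_0(v)$ if $v_1=1$, $=\overrightarrow{s}_0(v)$ if $v_1=0$; $s_m(v)=\overleftarrow{s}_m(v)$ if $v_m=0$, $=\overrightarrow{s}_m(v)$ if $v_m=1$; for $1\le i\le m-1$, $s_i$ swaps entries $v_i,v_{i+1}$. $G_{n,m}$ is the subgroup of the symmetric group on the vertex set generated by $s_0,\dots,s_m$. The affine Weyl group $\tilde C_m$ is the group with generators $\sigma_0,\dots,\sigma_m$ and relations $\sigma_i^2=1$, $(\sigma_i\sigma_j)^2=1$ for $|i-j|>1$, $(\sigma_i\sigma_{i+1})^3=1$ for $1\le i\le m-2$, $(\sigma_0\sigma_1)^4=(\sigma_{m-1}\sigma_m)^4=1$. *)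

theory Defs
  imports "HOL-Algebra.Algebra"
begin

text \<open>Since every
generator is an involution, the group presented by the Coxeter relations is the
monoid of words modulo the congruence generated by declaring each relator equal
to the empty word.\<close>

definition Ct_relators :: "nat \<Rightarrow> nat list set" where
  "Ct_relators m =
     {[i, i] | i. i \<le> m}
   \<union> {concat (replicate 2 [i, j]) | i j. i \<le> m \<and> j \<le> m \<and> (i + 1 < j \<or> j + 1 < i)}
   \<union> {concat (replicate 3 [i, i + 1]) | i. 1 \<le> i \<and> i + 2 \<le> m}
   \<union> {concat (replicate 4 [0, 1])}
   \<union> {concat (replicate 4 [m - 1, m])}"

inductive Ct_eqv :: "nat \<Rightarrow> nat list \<Rightarrow> nat list \<Rightarrow> bool" for m where
  refl: "Ct_eqv m w w"
| sym: "Ct_eqv m u w \<Longrightarrow> Ct_eqv m w u"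
| trans: "Ct_eqv m u v \<Longrightarrow> Ct_eqv m v w \<Longrightarrow> Ct_eqv m u w"
| rel: "r \<in> Ct_relators m \<Longrightarrow> Ct_eqv m (u @ v) (u @ r @ v)"

definition Ct_rel :: "nat \<Rightarrow> (nat list \<times> nat list) set" where
  "Ct_rel m = {(u, w). u \<in> lists {..m} \<and> w \<in> lists {..m} \<and> Ct_eqv m u w}"

definition Ctilde :: "nat \<Rightarrow> nat list set monoid" where
  "Ctilde m = \<lparr> carrier = lists {..m} // Ct_rel m,
                monoid.mult = (\<lambda>A B. \<Union>a\<in>A. \<Union>b\<in>B. Ct_rel m `` {a @ b}),
                monoid.one = Ct_rel m `` {[]} \<rparr>"

definition Ct_gen :: "nat \<Rightarrow> nat \<Rightarrow> nat list set" where
  "Ct_gen m i = Ct_rel m `` {[i]}"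

text \<open>A vertex (v_0,...,v_{m+1}) is encoded as a function nat => int that vanishes
beyond index m+1; v_0 and v_{m+1} are represented by their residues in {0..<n}.\<close>

definition yoke_vertices :: "nat \<Rightarrow> nat \<Rightarrow> (nat \<Rightarrow> int) set" where
  "yoke_vertices n m = {v. v 0 \<in> {0..<int n} \<and> v (m + 1) \<in> {0..<int n}
       \<and> (\<forall>i\<in>{1..m}. v i \<in> {0, 1}) \<and> (\<forall>i>m + 1. v i = 0)
       \<and> (\<Sum>i\<le>m + 1. v i) mod int n = 0}"

definition sl :: "nat \<Rightarrow> nat \<Rightarrow> nat \<Rightarrow> (nat \<Rightarrow> int) \<Rightarrow> (nat \<Rightarrow> int)" where
  "sl n m i v = (let a = v i + 1; b = v (i + 1) - 1 in
     v(i := (if i = 0 then a mod int n else a),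
       i + 1 := (if i = m then b mod int n else b)))"

definition sr :: "nat \<Rightarrow> nat \<Rightarrow> nat \<Rightarrow> (nat \<Rightarrow> int) \<Rightarrow> (nat \<Rightarrow> int)" where
  "sr n m i v = (let a = v i - 1; b = v (i + 1) + 1 in
     v(i := (if i = 0 then a mod int n else a),
       i + 1 := (if i = m then b mod int n else b)))"

definition yoke_s :: "nat \<Rightarrow> nat \<Rightarrow> nat \<Rightarrow> (nat \<Rightarrow> int) \<Rightarrow> (nat \<Rightarrow> int)" where
  "yoke_s n m i v =
     (if i = 0 then (if v 1 = 1 then sl n m 0 v else sr n m 0 v)
      else if i = m then (if v m = 0 then sl n m m v else sr n m m v)
      else v(i := v (i + 1), i + 1 := v i))"

definition yoke_perm :: "nat \<Rightarrow> nat \<Rightarrow> nat \<Rightarrow> (nat \<Rightarrow> int) \<Rightarrow> (nat \<Rightarrow> int)" where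
  "yoke_perm n m i = restrict (yoke_s n m i) (yoke_vertices n m)"

definition Gnm :: "nat \<Rightarrow> nat \<Rightarrow> ((nat \<Rightarrow> int) \<Rightarrow> (nat \<Rightarrow> int)) monoid" where
  "Gnm n m = (BijGroup (yoke_vertices n m))
     \<lparr> carrier := generate (BijGroup (yoke_vertices n m)) (yoke_perm n m ` {..m}) \<rparr>"

end

theory Submission
  imports Defs
begin

text \<open>
  The permutations s_i satisfy the defining relations of the affine Weyl group of type
  C-tilde_m.  They are involutions; for |i - j| > 1, s_i and s_j change disjoint pairs of
  coordinates and so commute; for 0 < i < m they are adjacent transpositions and satisfy
  the braid relation; and (s_0 s_1)^4 and (s_{m-1} s_m)^4 are the identity, as a check of
  the four possible states of the two bits involved shows.  Hence sigma_i |-> s_i induces a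
  homomorphism from the presented group, and it is onto because every element of the
  group generated by the involutions s_i is a product of them.
\<close>

definition word_eval :: "('a, 'b) monoid_scheme \<Rightarrow> (nat \<Rightarrow> 'a) \<Rightarrow> nat list \<Rightarrow> 'a" where
  "word_eval G f w = foldr (\<lambda>i x. f i \<otimes>\<^bsub>G\<^esub> x) w \<one>\<^bsub>G\<^esub>"

lemma word_eval_Nil [simp]: "word_eval G f [] = \<one>\<^bsub>G\<^esub>"
  by (simp add: word_eval_def)

lemma word_eval_Cons [simp]: "word_eval G f (i # w) = f i \<otimes>\<^bsub>G\<^esub> word_eval G f w"
  by (simp add: word_eval_def)

context monoid
begin

lemma word_eval_closed:
  assumes f: "f \<in> I \<rightarrow> carrier G" and w: "w \<in> lists I"
  shows "word_eval G f w \<in> carrier G"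
  using w by induction (simp_all add: funcset_mem[OF f])

lemma word_eval_append:
  assumes f: "f \<in> I \<rightarrow> carrier G" and "u \<in> lists I" "w \<in> lists I"
  shows "word_eval G f (u @ w) = word_eval G f u \<otimes> word_eval G f w"
  using assms(2) by induction (simp_all add: assms(3) funcset_mem[OF f] word_eval_closed[OF f] m_assoc)

end

lemma Ct_relators_lists: "1 \<le> m \<Longrightarrow> Ct_relators m \<subseteq> lists {..m}"
  by (auto simp: Ct_relators_def numeral_eq_Suc)

text \<open>The context words in rule \<open>rel\<close> of \<^const>\<open>Ct_eqv\<close> may use any letters, so
  this is needed to keep derivations inside the alphabet \<open>{..m}\<close>.\<close>

lemma Ct_eqv_lists:
  assumes "Ct_eqv m u w" "1 \<le> m"
  shows "u \<in> lists {..m} \<longleftrightarrow> w \<in> lists {..m}"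
  using assms(1) by induction (use Ct_relators_lists[OF assms(2)] in auto)

lemma Ct_eqv_context: "Ct_eqv m u u' \<Longrightarrow> Ct_eqv m (x @ u @ y) (x @ u' @ y)"
proof (induction rule: Ct_eqv.induct)
  case (refl w)
  show ?case by (rule Ct_eqv.refl)
next
  case (sym u w)
  show ?case using sym.IH by (rule Ct_eqv.sym)
next
  case (trans u v w)
  show ?case using trans.IH by (rule Ct_eqv.trans)
next
  case (rel r u v)
  show ?case using Ct_eqv.rel[OF rel, of "x @ u" "v @ y"] by simp
qed

lemma Ct_eqv_append: "Ct_eqv m u u' \<Longrightarrow> Ct_eqv m w w' \<Longrightarrow> Ct_eqv m (u @ w) (u' @ w')"
  using Ct_eqv_context[of m u u' "[]" w] Ct_eqv_context[of m w w' u' "[]"]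
  by (simp add: Ct_eqv.trans)

lemma Ct_rel_self: "a \<in> lists {..m} \<Longrightarrow> a \<in> Ct_rel m `` {a}"
  by (simp add: Ct_rel_def Ct_eqv.refl)

lemma Ct_class_mult:
  assumes "a \<in> lists {..m}" "b \<in> lists {..m}"
  shows "Ct_rel m `` {a} \<otimes>\<^bsub>Ctilde m\<^esub> Ct_rel m `` {b} = Ct_rel m `` {a @ b}"
proof
  show "Ct_rel m `` {a} \<otimes>\<^bsub>Ctilde m\<^esub> Ct_rel m `` {b} \<subseteq> Ct_rel m `` {a @ b}"
  proof
    fix x assume "x \<in> Ct_rel m `` {a} \<otimes>\<^bsub>Ctilde m\<^esub> Ct_rel m `` {b}"
    then obtain a' b' where "Ct_eqv m a a'" "Ct_eqv m b b'" "Ct_eqv m (a' @ b') x"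
      and "x \<in> lists {..m}"
      by (auto simp: Ctilde_def Ct_rel_def)
    then have "Ct_eqv m (a @ b) x" by (meson Ct_eqv.trans Ct_eqv_append)
    then show "x \<in> Ct_rel m `` {a @ b}"
      using assms \<open>x \<in> lists {..m}\<close> by (simp add: Ct_rel_def)
  qed
  show "Ct_rel m `` {a @ b} \<subseteq> Ct_rel m `` {a} \<otimes>\<^bsub>Ctilde m\<^esub> Ct_rel m `` {b}"
    using Ct_rel_self[OF assms(1)] Ct_rel_self[OF assms(2)] by (auto simp: Ctilde_def)
qed

lemma carrier_Ctilde: "carrier (Ctilde m) = (\<lambda>a. Ct_rel m `` {a}) ` lists {..m}"
  by (auto simp: Ctilde_def quotient_def)

lemma (in group) generate_eq_word_evals:
  assumes f: "f \<in> I \<rightarrow> carrier G" and involution: "\<forall>i\<in>I. f i \<otimes> f i = \<one>"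
  shows "generate G (f ` I) = word_eval G f ` lists I"
proof
  show "generate G (f ` I) \<subseteq> word_eval G f ` lists I"
  proof
    fix g assume "g \<in> generate G (f ` I)"
    then show "g \<in> word_eval G f ` lists I"
    proof induction
      case one
      show ?case by (rule image_eqI[of _ _ "[]"]) auto
    next
      case (incl g)
      then obtain i where "i \<in> I" "g = f i" by blast
      then show ?case using f by (intro image_eqI[of _ _ "[i]"]) (auto simp: Pi_iff)
    next
      case (inv g)
      then obtain i where "i \<in> I" "g = f i" by blast
      then have "inv g = f i" using f involution by (auto intro: inv_equality)
      then show ?case using \<open>i \<in> I\<close> f by (intro image_eqI[of _ _ "[i]"]) (auto simp: Pi_iff)
    next
      case (eng g h)
      then obtain u w where "u \<in> lists I" "w \<in> lists I" "g = word_eval G f u" "h = word_eval G f w"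
        by blast
      then show ?case using f by (intro image_eqI[of _ _ "u @ w"]) (auto simp: word_eval_append)
    qed
  qed
  show "word_eval G f ` lists I \<subseteq> generate G (f ` I)"
  proof
    fix g assume "g \<in> word_eval G f ` lists I"
    then obtain w where "w \<in> lists I" "g = word_eval G f w" by blast
    then show "g \<in> generate G (f ` I)"
      by (induction w arbitrary: g) (auto intro: generate.intros)
  qed
qed

locale Ctilde_relations = group G for G (structure) +
  fixes m :: nat and f :: "nat \<Rightarrow> 'a"
  assumes m_pos: "1 \<le> m"
    and generators_closed: "f \<in> {..m} \<rightarrow> carrier G"
    and relators_trivial: "\<forall>r\<in>Ct_relators m. word_eval G f r = \<one>"
begin

lemma word_eval_Ct_eqv: "Ct_eqv m u w \<Longrightarrow> u \<in> lists {..m} \<Longrightarrow> word_eval G f u = word_eval G f w"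
proof (induction rule: Ct_eqv.induct)
  case (sym u w)
  have "u \<in> lists {..m}" using Ct_eqv_lists[OF sym.hyps m_pos] sym.prems by simp
  then show ?case using sym.IH by simp
next
  case (trans u v w)
  have "v \<in> lists {..m}" using Ct_eqv_lists[OF trans.hyps(1) m_pos] trans.prems by simp
  then show ?case using trans.IH trans.prems by simp
next
  case (rel r u v)
  have "r \<in> lists {..m}" using rel.hyps Ct_relators_lists[OF m_pos] by blast
  then show ?case
    using rel generators_closed relators_trivial by (simp add: word_eval_append word_eval_closed)
qed simp

lemma generator_involution: "i \<le> m \<Longrightarrow> f i \<otimes> f i = \<one>"
proof -
  assume i: "i \<le> m"
  then have "[i, i] \<in> Ct_relators m" by (auto simp: Ct_relators_def)
  then have "word_eval G f [i, i] = \<one>" using relators_trivial by blast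
  then show "f i \<otimes> f i = \<one>" using i generators_closed by (auto simp: Pi_iff)
qed

definition lift :: "nat list set \<Rightarrow> 'a" where
  "lift A = word_eval G f (SOME w. w \<in> A)"

lemma lift_class: "a \<in> lists {..m} \<Longrightarrow> lift (Ct_rel m `` {a}) = word_eval G f a"
proof -
  assume a: "a \<in> lists {..m}"
  have "(SOME w. w \<in> Ct_rel m `` {a}) \<in> Ct_rel m `` {a}"
    using Ct_rel_self[OF a] by (rule someI)
  then have "Ct_eqv m a (SOME w. w \<in> Ct_rel m `` {a})" using a by (simp add: Ct_rel_def)
  then have "word_eval G f a = word_eval G f (SOME w. w \<in> Ct_rel m `` {a})"
    using a by (rule word_eval_Ct_eqv)
  then show ?thesis by (simp add: lift_def)
qed

lemma lift_image: "lift ` carrier (Ctilde m) = generate G (f ` {..m})"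
  using generator_involution
  by (simp add: generate_eq_word_evals[OF generators_closed] carrier_Ctilde image_image lift_class
      cong: image_cong)

lemma lift_hom: "lift \<in> hom (Ctilde m) (G\<lparr>carrier := generate G (f ` {..m})\<rparr>)"
proof (rule homI)
  show "lift A \<in> carrier (G\<lparr>carrier := generate G (f ` {..m})\<rparr>)" if "A \<in> carrier (Ctilde m)" for A
    using imageI[OF that, of lift] lift_image by simp
  fix A B assume "A \<in> carrier (Ctilde m)" "B \<in> carrier (Ctilde m)"
  then obtain a b where "a \<in> lists {..m}" "b \<in> lists {..m}"
    and "A = Ct_rel m `` {a}" "B = Ct_rel m `` {b}"
    by (auto simp: carrier_Ctilde)
  then show "lift (A \<otimes>\<^bsub>Ctilde m\<^esub> B) = lift A \<otimes>\<^bsub>G\<lparr>carrier := generate G (f ` {..m})\<rparr>\<^esub> lift B"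
    using generators_closed by (simp add: Ct_class_mult lift_class word_eval_append)
qed

lemma lift_Ct_gen: "i \<le> m \<Longrightarrow> lift (Ct_gen m i) = f i"
  using generators_closed by (simp add: Ct_gen_def lift_class Pi_iff)

end

lemma word_eval_BijGroup:
  assumes f: "f \<in> I \<rightarrow> carrier (BijGroup S)" and w: "w \<in> lists I"
  shows "word_eval (BijGroup S) f w = (\<lambda>x\<in>S. foldr f w x)"
  using w
proof induction
  case Nil
  show ?case by (simp add: BijGroup_def)
next
  case (Cons i w)
  interpret BG: group "BijGroup S" by (rule group_BijGroup)
  have "f i \<in> carrier (BijGroup S)" using f Cons.hyps(1) by blast
  moreover have "word_eval (BijGroup S) f w \<in> carrier (BijGroup S)"
    using f Cons.hyps(2) by (rule BG.word_eval_closed)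
  ultimately have "word_eval (BijGroup S) f (i # w) = compose S (f i) (word_eval (BijGroup S) f w)"
    by (simp add: BijGroup_def)
  also have "\<dots> = (\<lambda>x\<in>S. foldr f (i # w) x)"
    unfolding compose_def Cons.IH by (intro restrict_ext) simp
  finally show ?case .
qed

lemma foldr_concat_replicate: "foldr f (concat (replicate k xs)) = foldr f xs ^^ k"
  by (induction k) simp_all

lemma funpow_4: "(f ^^ 4) x = f (f (f (f x)))"
  by (simp add: numeral_eq_Suc)

lemma yoke_vertex_bit: "v \<in> yoke_vertices n m \<Longrightarrow> 1 \<le> k \<Longrightarrow> k \<le> m \<Longrightarrow> v k \<in> {0, 1}"
  by (simp add: yoke_vertices_def)

lemma yoke_vertex_first_mod: "v \<in> yoke_vertices n m \<Longrightarrow> v 0 mod int n = v 0"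
  by (simp add: yoke_vertices_def)

lemma yoke_vertex_last_mod: "v \<in> yoke_vertices n m \<Longrightarrow> v (m + 1) mod int n = v (m + 1)"
  by (simp add: yoke_vertices_def)

lemma yoke_s_first:
  "2 \<le> m \<Longrightarrow> v 1 \<in> {0, 1} \<Longrightarrow>
     yoke_s n m 0 v = v(0 := (v 0 + 2 * v 1 - 1) mod int n, 1 := 1 - v 1)"
  by (auto simp: yoke_s_def sl_def sr_def ac_simps)

lemma yoke_s_last:
  "2 \<le> m \<Longrightarrow> v m \<in> {0, 1} \<Longrightarrow>
     yoke_s n m m v = v(m := 1 - v m, m + 1 := (v (m + 1) + 2 * v m - 1) mod int n)"
  by (auto simp: yoke_s_def sl_def sr_def ac_simps)

lemma yoke_s_middle: "0 < i \<Longrightarrow> i < m \<Longrightarrow> yoke_s n m i v = v(i := v (i + 1), i + 1 := v i)"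
  by (simp add: yoke_s_def)

lemma sum_fun_upd:
  fixes f :: "'a \<Rightarrow> 'b::ab_group_add"
  shows "finite A \<Longrightarrow> i \<in> A \<Longrightarrow> sum (f(i := a)) A = sum f A - f i + a"
  by (simp add: sum.remove[of A i] sum.cong[of "A - {i}" "A - {i}" "f(i := a)" f])

lemma yoke_vertices_fun_upd:
  assumes v: "v \<in> yoke_vertices n m" and i: "i \<le> m"
    and a: "if i = 0 then a \<in> {0..<int n} else a \<in> {0, 1}"
    and c: "if i = m then c \<in> {0..<int n} else c \<in> {0, 1}"
    and sum_mod: "(a + c) mod int n = (v i + v (i + 1)) mod int n"
  shows "v(i := a, i + 1 := c) \<in> yoke_vertices n m"
proof -
  have "(\<Sum>k\<le>m + 1. (v(i := a, i + 1 := c)) k) = (\<Sum>k\<le>m + 1. v k) + ((a + c) - (v i + v (i + 1)))"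
    using i sum_fun_upd[of "{..m + 1}" "i + 1" "v(i := a)" c] sum_fun_upd[of "{..m + 1}" i v a]
    by simp
  moreover have "int n dvd (\<Sum>k\<le>m + 1. v k)"
    using v by (simp add: yoke_vertices_def mod_eq_0_iff_dvd)
  moreover have "int n dvd (a + c) - (v i + v (i + 1))"
    using sum_mod by (simp add: mod_eq_dvd_iff)
  ultimately have "(\<Sum>k\<le>m + 1. (v(i := a, i + 1 := c)) k) mod int n = 0"
    by (simp add: mod_eq_0_iff_dvd)
  then show ?thesis
    using v i a c by (auto simp: yoke_vertices_def split: if_splits)
qed

lemma yoke_s_in_vertices:
  assumes "1 \<le> n" "2 \<le> m" "i \<le> m" and v: "v \<in> yoke_vertices n m"
  shows "yoke_s n m i v \<in> yoke_vertices n m"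
proof -
  consider "i = 0" | "i = m" | "0 < i" "i < m" using assms by linarith
  then show ?thesis
  proof cases
    case 1
    have v1: "v 1 \<in> {0, 1}" using yoke_vertex_bit[OF v, of 1] assms by simp
    have "v(0 := (v 0 + 2 * v 1 - 1) mod int n, 0 + 1 := 1 - v 1) \<in> yoke_vertices n m"
      by (rule yoke_vertices_fun_upd[OF v]) (use v1 assms in \<open>auto simp: mod_simps\<close>)
    then show ?thesis
      using 1 v1 assms by (simp add: yoke_s_first)
  next
    case 2
    have vm: "v m \<in> {0, 1}" using yoke_vertex_bit[OF v, of m] assms by simp
    have "v(m := 1 - v m, m + 1 := (v (m + 1) + 2 * v m - 1) mod int n) \<in> yoke_vertices n m"
      by (rule yoke_vertices_fun_upd[OF v]) (use vm assms in \<open>auto simp: mod_simps\<close>)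
    then show ?thesis
      using 2 vm assms by (simp add: yoke_s_last)
  next
    case 3
    have "v i \<in> {0, 1}" "v (i + 1) \<in> {0, 1}"
      using yoke_vertex_bit[OF v, of i] yoke_vertex_bit[OF v, of "i + 1"] 3 by simp_all
    then have "v(i := v (i + 1), i + 1 := v i) \<in> yoke_vertices n m"
      using 3 by (intro yoke_vertices_fun_upd[OF v]) (simp_all add: add.commute)
    then show ?thesis
      using 3 by (simp add: yoke_s_middle)
  qed
qed

lemma yoke_s_involutive:
  assumes "2 \<le> m" "i \<le> m" and v: "v \<in> yoke_vertices n m"
  shows "yoke_s n m i (yoke_s n m i v) = v"
proof -
  consider "i = 0" | "i = m" | "0 < i" "i < m" using assms by linarith
  then show ?thesis
  proof cases
    case 1
    have "v 1 = 0 \<or> v 1 = 1" using yoke_vertex_bit[OF v, of 1] assms by simp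
    then show ?thesis
      using 1 assms yoke_vertex_first_mod[OF v]
      by (elim disjE) (simp_all add: yoke_s_first fun_eq_iff mod_simps)
  next
    case 2
    have "v m = 0 \<or> v m = 1" using yoke_vertex_bit[OF v, of m] assms by simp
    then show ?thesis
      using 2 assms yoke_vertex_last_mod[OF v]
      by (elim disjE) (simp_all add: yoke_s_last fun_eq_iff mod_simps)
  next
    case 3
    then show ?thesis by (simp add: yoke_s_middle fun_eq_iff)
  qed
qed

lemma yoke_s_commute:
  assumes "2 \<le> m" "i + 1 < j" "j \<le> m" and v: "v \<in> yoke_vertices n m"
  shows "yoke_s n m i (yoke_s n m j v) = yoke_s n m j (yoke_s n m i v)"
proof -
  have first: "v 1 = 0 \<or> v 1 = 1" and last: "v m = 0 \<or> v m = 1"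
    using yoke_vertex_bit[OF v, of 1] yoke_vertex_bit[OF v, of m] assms by simp_all
  consider "i = 0" "j = m" | "i = 0" "j < m" | "0 < i" "j = m" | "0 < i" "j < m"
    using assms by linarith
  then show ?thesis
  proof cases
    case 1
    then show ?thesis using first last assms
      by (elim disjE) (simp_all add: yoke_s_first yoke_s_last fun_eq_iff)
  next
    case 2
    then show ?thesis using first assms
      by (elim disjE) (simp_all add: yoke_s_first yoke_s_middle fun_eq_iff)
  next
    case 3
    then show ?thesis using last assms
      by (elim disjE) (simp_all add: yoke_s_last yoke_s_middle fun_eq_iff)
  next
    case 4
    then show ?thesis using assms by (simp add: yoke_s_middle fun_eq_iff)
  qed
qed

lemma yoke_s_braid:
  assumes "1 \<le> i" "i + 2 \<le> m"
  shows "((yoke_s n m i \<circ> yoke_s n m (i + 1)) ^^ 3) v = v"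
  using assms by (simp add: yoke_s_middle fun_eq_iff numeral_3_eq_3)

lemma yoke_s_first_order4:
  assumes "2 \<le> m" and v: "v \<in> yoke_vertices n m"
  shows "((yoke_s n m 0 \<circ> yoke_s n m 1) ^^ 4) v = v"
proof -
  \<comment> \<open>\<open>One_nat_def\<close> is a simp rule, so the rewrite rules are stated with \<open>Suc 0\<close>.\<close>
  have s0: "yoke_s n m 0 w = w(0 := (w 0 + 2 * w (Suc 0) - 1) mod int n, Suc 0 := 1 - w (Suc 0))"
    if "w (Suc 0) \<in> {0, 1}" for w
    using yoke_s_first[of m w n] assms that by simp
  have s1: "yoke_s n m (Suc 0) w = w(Suc 0 := w (Suc (Suc 0)), Suc (Suc 0) := w (Suc 0))" for w
    using yoke_s_middle[of 1 m n w] assms by (simp add: numeral_2_eq_2)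
  have "v (Suc 0) = 0 \<or> v (Suc 0) = 1" "v (Suc (Suc 0)) = 0 \<or> v (Suc (Suc 0)) = 1"
    using yoke_vertex_bit[OF v, of 1] yoke_vertex_bit[OF v, of 2] assms by (simp_all add: numeral_2_eq_2)
  then show ?thesis
    using yoke_vertex_first_mod[OF v] unfolding funpow_4 One_nat_def
    by (elim disjE; simp add: s0 s1 fun_eq_iff mod_simps)
qed

lemma yoke_s_last_order4:
  assumes "2 \<le> m" and v: "v \<in> yoke_vertices n m"
  shows "((yoke_s n m (m - 1) \<circ> yoke_s n m m) ^^ 4) v = v"
proof -
  define k where "k = m - 1"
  have k: "0 < k" "k < m" "k + 1 = m" using assms by (simp_all add: k_def)
  have s1: "yoke_s n m k w = w(k := w m, m := w k)" for w
    using yoke_s_middle[of k m] k by simp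
  have sm: "yoke_s n m m w = w(m := 1 - w m, Suc m := (w (Suc m) + 2 * w m - 1) mod int n)"
    if "w m \<in> {0, 1}" for w
    using yoke_s_last[of m w n] assms that by simp
  have "v k = 0 \<or> v k = 1" "v m = 0 \<or> v m = 1"
    using yoke_vertex_bit[OF v, of k] yoke_vertex_bit[OF v, of m] k by simp_all
  then show ?thesis
    using k(1,2) yoke_vertex_last_mod[OF v] unfolding funpow_4 k_def[symmetric]
    by (elim disjE; simp add: s1 sm fun_eq_iff mod_simps)
qed

lemma foldr_yoke_s_in_vertices:
  assumes "1 \<le> n" "2 \<le> m" "w \<in> lists {..m}" "v \<in> yoke_vertices n m"
  shows "foldr (yoke_s n m) w v \<in> yoke_vertices n m"
  using assms(3) by induction (simp_all add: assms(4) yoke_s_in_vertices[OF assms(1,2)])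

lemma foldr_yoke_perm:
  assumes "1 \<le> n" "2 \<le> m" "w \<in> lists {..m}" "v \<in> yoke_vertices n m"
  shows "foldr (yoke_perm n m) w v = foldr (yoke_s n m) w v"
  using assms(3) by induction (simp_all add: yoke_perm_def foldr_yoke_s_in_vertices[OF assms(1,2) _ assms(4)])

lemma yoke_perm_in_BijGroup:
  assumes "1 \<le> n" "2 \<le> m" "i \<le> m"
  shows "yoke_perm n m i \<in> carrier (BijGroup (yoke_vertices n m))"
proof -
  have "bij_betw (yoke_s n m i) (yoke_vertices n m) (yoke_vertices n m)"
    by (rule bij_betw_byWitness[where f' = "yoke_s n m i"])
       (auto simp: yoke_s_in_vertices[OF assms] yoke_s_involutive[OF assms(2,3)])
  then show ?thesis
    by (simp add: BijGroup_def Bij_def yoke_perm_def bij_betw_cong[of _ "restrict _ _"])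
qed

lemma yoke_relators_fixpoints:
  assumes "1 \<le> n" "2 \<le> m" "r \<in> Ct_relators m" "v \<in> yoke_vertices n m"
  shows "foldr (yoke_s n m) r v = v"
  using assms(3) unfolding Ct_relators_def
proof (elim UnE CollectE exE conjE)
  fix i assume "r = [i, i]" "i \<le> m"
  then show ?thesis using assms by (simp add: yoke_s_involutive)
next
  fix i j assume r: "r = concat (replicate 2 [i, j])" and "i \<le> m" "j \<le> m" "i + 1 < j \<or> j + 1 < i"
  then have "yoke_s n m i (yoke_s n m j v) = yoke_s n m j (yoke_s n m i v)"
    using assms yoke_s_commute yoke_s_commute[symmetric] by blast
  then show ?thesis
    using assms \<open>i \<le> m\<close> \<open>j \<le> m\<close>
    by (simp add: r foldr_concat_replicate numeral_2_eq_2 yoke_s_in_vertices yoke_s_involutive)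
next
  fix i assume "r = concat (replicate 3 [i, i + 1])" "1 \<le> i" "i + 2 \<le> m"
  then show ?thesis using yoke_s_braid[of i m n v] by (simp add: foldr_concat_replicate comp_def)
next
  assume "r \<in> {concat (replicate 4 [0, 1])}"
  then show ?thesis using yoke_s_first_order4[of m v n] assms by (simp add: foldr_concat_replicate comp_def)
next
  assume "r \<in> {concat (replicate 4 [m - 1, m])}"
  then show ?thesis using yoke_s_last_order4[of m v n] assms by (simp add: foldr_concat_replicate comp_def)
qed

lemma yoke_perm_relators:
  assumes "1 \<le> n" "2 \<le> m" "r \<in> Ct_relators m"
  shows "word_eval (BijGroup (yoke_vertices n m)) (yoke_perm n m) r
           = \<one>\<^bsub>BijGroup (yoke_vertices n m)\<^esub>"
proof -
  have f: "yoke_perm n m \<in> {..m} \<rightarrow> carrier (BijGroup (yoke_vertices n m))"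
    using yoke_perm_in_BijGroup[OF assms(1,2)] by simp
  have r: "r \<in> lists {..m}" using Ct_relators_lists[of m] assms(2,3) by auto
  have "word_eval (BijGroup (yoke_vertices n m)) (yoke_perm n m) r
          = (\<lambda>v\<in>yoke_vertices n m. foldr (yoke_perm n m) r v)"
    by (rule word_eval_BijGroup[OF f r])
  also have "\<dots> = (\<lambda>v\<in>yoke_vertices n m. v)"
    by (intro restrict_ext) (simp add: foldr_yoke_perm[OF assms(1,2) r] yoke_relators_fixpoints[OF assms])
  finally show ?thesis by (simp add: BijGroup_def)
qed

theorem corollary3p16:
  fixes n m :: nat
  assumes "n \<ge> 1" and "m \<ge> 2"
  shows "\<exists>h. h \<in> hom (Ctilde m) (Gnm n m)
           \<and> h ` carrier (Ctilde m) = carrier (Gnm n m)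
           \<and> (\<forall>i\<le>m. h (Ct_gen m i) = yoke_perm n m i)"
proof -
  interpret Ctilde_relations "BijGroup (yoke_vertices n m)" m "yoke_perm n m"
  proof (intro Ctilde_relations.intro Ctilde_relations_axioms.intro group_BijGroup)
    show "1 \<le> m" using assms by simp
    show "yoke_perm n m \<in> {..m} \<rightarrow> carrier (BijGroup (yoke_vertices n m))"
      using yoke_perm_in_BijGroup[OF assms] by simp
    show "\<forall>r\<in>Ct_relators m. word_eval (BijGroup (yoke_vertices n m)) (yoke_perm n m) r
            = \<one>\<^bsub>BijGroup (yoke_vertices n m)\<^esub>"
      using yoke_perm_relators[OF assms] by blast
  qed
  show ?thesis
    using lift_hom lift_image lift_Ct_gen by (intro exI[of _ lift]) (simp add: Gnm_def)
qed

end
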